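(* Let $A,B$ be unital $k$-algebras and $f:B\to A$ a unital algebra homomorphism. The modulation $A_f$ is an invertible morphism in $\mathsf{Alg}$ (i.e. a Morita equivalence between $A$ and $B$: there is a biunital $(B,A)$-bimodule $Y$ with $A_f\otimes_B Y\cong A$ as $(A,A)$-bimodules and $Y\otimes_A A_f\cong B$ as $(B,B)$-bimodules) if and only if $f$ is an algebra isomorphism.
   Context: $k$ is a commutative ring; all algebras are unital $k$-algebras. The category $\mathsf{Alg}$ has unital $k$-algebras as objects and, as morphisms to $A$ from $B$, isomorphism classes of biunital $(A,B)$-bimodules, composed by $X\otimes_B Y$. The modulation $A_f$ of a unital homomorphism $f:B\to A$ is the $k$-module $A$ with $(A,B)$-bimodule structure $a\cdot x\cdot b=a\,x\,f(b)$. *)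

theory Defs
  imports Main
begin

definition k_algebra :: "('k::comm_ring_1 \<Rightarrow> 'a::ring_1) \<Rightarrow> bool" where
  "k_algebra i \<longleftrightarrow> i 1 = 1 \<and> (\<forall>c d. i (c + d) = i c + i d) \<and>
     (\<forall>c d. i (c * d) = i c * i d) \<and> (\<forall>c a. i c * a = a * i c)"

definition alg_hom :: "('k::comm_ring_1 \<Rightarrow> 'a::ring_1) \<Rightarrow> ('k \<Rightarrow> 'b::ring_1) \<Rightarrow> ('b \<Rightarrow> 'a) \<Rightarrow> bool" where
  "alg_hom iA iB f \<longleftrightarrow> f 1 = 1 \<and> (\<forall>x y. f (x + y) = f x + f y) \<and>
     (\<forall>x y. f (x * y) = f x * f y) \<and> (\<forall>c. f (iB c) = iA c)"

definition alg_iso :: "('k::comm_ring_1 \<Rightarrow> 'a::ring_1) \<Rightarrow> ('k \<Rightarrow> 'b::ring_1) \<Rightarrow> ('b \<Rightarrow> 'a) \<Rightarrow> bool" where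
  "alg_iso iA iB f \<longleftrightarrow> alg_hom iA iB f \<and> bij f"

record ('a, 'b, 'x) bimod =
  bcar :: "'x set"
  badd :: "'x \<Rightarrow> 'x \<Rightarrow> 'x"
  bzero :: 'x
  bneg :: "'x \<Rightarrow> 'x"
  lact :: "'a \<Rightarrow> 'x \<Rightarrow> 'x"
  ract :: "'x \<Rightarrow> 'b \<Rightarrow> 'x"

text \<open>Biunital (A,B)-bimodule over k: the two induced k-actions agree.\<close>

definition is_bimod :: "('k::comm_ring_1 \<Rightarrow> 'a::ring_1) \<Rightarrow> ('k \<Rightarrow> 'b::ring_1) \<Rightarrow> ('a, 'b, 'x) bimod \<Rightarrow> bool" where
  "is_bimod iA iB M \<longleftrightarrow>
     bzero M \<in> bcar M \<and>
     (\<forall>x\<in>bcar M. \<forall>y\<in>bcar M. badd M x y \<in> bcar M) \<and>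
     (\<forall>x\<in>bcar M. bneg M x \<in> bcar M) \<and>
     (\<forall>x\<in>bcar M. \<forall>y\<in>bcar M. \<forall>z\<in>bcar M. badd M (badd M x y) z = badd M x (badd M y z)) \<and>
     (\<forall>x\<in>bcar M. \<forall>y\<in>bcar M. badd M x y = badd M y x) \<and>
     (\<forall>x\<in>bcar M. badd M (bzero M) x = x) \<and>
     (\<forall>x\<in>bcar M. badd M (bneg M x) x = bzero M) \<and>
     (\<forall>a. \<forall>x\<in>bcar M. lact M a x \<in> bcar M) \<and>
     (\<forall>b. \<forall>x\<in>bcar M. ract M x b \<in> bcar M) \<and>
     (\<forall>a. \<forall>x\<in>bcar M. \<forall>y\<in>bcar M. lact M a (badd M x y) = badd M (lact M a x) (lact M a y)) \<and>
     (\<forall>a a'. \<forall>x\<in>bcar M. lact M (a + a') x = badd M (lact M a x) (lact M a' x)) \<and>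
     (\<forall>a a'. \<forall>x\<in>bcar M. lact M (a * a') x = lact M a (lact M a' x)) \<and>
     (\<forall>x\<in>bcar M. lact M 1 x = x) \<and>
     (\<forall>b. \<forall>x\<in>bcar M. \<forall>y\<in>bcar M. ract M (badd M x y) b = badd M (ract M x b) (ract M y b)) \<and>
     (\<forall>b b'. \<forall>x\<in>bcar M. ract M x (b + b') = badd M (ract M x b) (ract M x b')) \<and>
     (\<forall>b b'. \<forall>x\<in>bcar M. ract M x (b * b') = ract M (ract M x b) b') \<and>
     (\<forall>x\<in>bcar M. ract M x 1 = x) \<and>
     (\<forall>a b. \<forall>x\<in>bcar M. lact M a (ract M x b) = ract M (lact M a x) b) \<and>
     (\<forall>c. \<forall>x\<in>bcar M. lact M (iA c) x = ract M x (iB c))"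

definition bimod_iso :: "('a, 'b, 'x) bimod \<Rightarrow> ('a, 'b, 'z) bimod \<Rightarrow> bool" where
  "bimod_iso M N \<longleftrightarrow> (\<exists>h. bij_betw h (bcar M) (bcar N) \<and>
     (\<forall>x\<in>bcar M. \<forall>y\<in>bcar M. h (badd M x y) = badd N (h x) (h y)) \<and>
     (\<forall>a. \<forall>x\<in>bcar M. h (lact M a x) = lact N a (h x)) \<and>
     (\<forall>b. \<forall>x\<in>bcar M. h (ract M x b) = ract N (h x) b))"

text \<open>The modulation A_f of f : B -> A, an (A,B)-bimodule; modulation id is the regular bimodule.\<close>

definition modulation :: "('b \<Rightarrow> 'a::ring_1) \<Rightarrow> ('a, 'b, 'a) bimod" where
  "modulation f = \<lparr>bcar = UNIV, badd = (+), bzero = 0, bneg = uminus,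
                   lact = (\<lambda>a x. a * x), ract = (\<lambda>x b. x * f b)\<rparr>"

text \<open>Tensor product X (x)_B Y: finitely supported integer formal sums on
carrier pairs, modulo the subgroup generated by biadditivity and B-balancing.\<close>

definition delta :: "'z \<Rightarrow> 'z \<Rightarrow> int" where
  "delta z = (\<lambda>p. if p = z then 1 else 0)"

definition push :: "('p \<Rightarrow> 'q) \<Rightarrow> ('p \<Rightarrow> int) \<Rightarrow> 'q \<Rightarrow> int" where
  "push g \<phi> = (\<lambda>q. \<Sum>p\<in>{p. \<phi> p \<noteq> 0 \<and> g p = q}. \<phi> p)"

inductive_set tens_rel :: "('a, 'b, 'x) bimod \<Rightarrow> ('b, 'c, 'y) bimod \<Rightarrow> ('x \<times> 'y \<Rightarrow> int) set"
  for X Y where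
  tr_zero: "(\<lambda>_. 0) \<in> tens_rel X Y"
| tr_addl: "\<lbrakk>x \<in> bcar X; x' \<in> bcar X; y \<in> bcar Y\<rbrakk> \<Longrightarrow>
     (\<lambda>p. delta (badd X x x', y) p - delta (x, y) p - delta (x', y) p) \<in> tens_rel X Y"
| tr_addr: "\<lbrakk>x \<in> bcar X; y \<in> bcar Y; y' \<in> bcar Y\<rbrakk> \<Longrightarrow>
     (\<lambda>p. delta (x, badd Y y y') p - delta (x, y) p - delta (x, y') p) \<in> tens_rel X Y"
| tr_bal: "\<lbrakk>x \<in> bcar X; y \<in> bcar Y\<rbrakk> \<Longrightarrow>
     (\<lambda>p. delta (ract X x b, y) p - delta (x, lact Y b y) p) \<in> tens_rel X Y"
| tr_diff: "\<lbrakk>\<phi> \<in> tens_rel X Y; \<psi> \<in> tens_rel X Y\<rbrakk> \<Longrightarrow> (\<lambda>p. \<phi> p - \<psi> p) \<in> tens_rel X Y"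

definition formal_sums :: "('a, 'b, 'x) bimod \<Rightarrow> ('b, 'c, 'y) bimod \<Rightarrow> ('x \<times> 'y \<Rightarrow> int) set" where
  "formal_sums X Y = {\<phi>. finite {p. \<phi> p \<noteq> 0} \<and> (\<forall>p. \<phi> p \<noteq> 0 \<longrightarrow> p \<in> bcar X \<times> bcar Y)}"

definition tcls :: "('a, 'b, 'x) bimod \<Rightarrow> ('b, 'c, 'y) bimod \<Rightarrow> ('x \<times> 'y \<Rightarrow> int) \<Rightarrow> ('x \<times> 'y \<Rightarrow> int) set" where
  "tcls X Y \<phi> = {\<psi>. (\<lambda>p. \<psi> p - \<phi> p) \<in> tens_rel X Y}"

definition tensor :: "('a, 'b, 'x) bimod \<Rightarrow> ('b, 'c, 'y) bimod \<Rightarrow> ('a, 'c, ('x \<times> 'y \<Rightarrow> int) set) bimod" where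
  "tensor X Y = \<lparr>
     bcar = tcls X Y ` formal_sums X Y,
     badd = (\<lambda>S T. \<Union>\<phi>\<in>S. \<Union>\<psi>\<in>T. tcls X Y (\<lambda>p. \<phi> p + \<psi> p)),
     bzero = tcls X Y (\<lambda>_. 0),
     bneg = (\<lambda>S. \<Union>\<phi>\<in>S. tcls X Y (\<lambda>p. - \<phi> p)),
     lact = (\<lambda>a S. \<Union>\<phi>\<in>S. tcls X Y (push (\<lambda>(x, y). (lact X a x, y)) \<phi>)),
     ract = (\<lambda>S c. \<Union>\<phi>\<in>S. tcls X Y (push (\<lambda>(x, y). (x, ract Y y c)) \<phi>))\<rparr>"

definition inverse_of_modulation ::
  "('k::comm_ring_1 \<Rightarrow> 'a::ring_1) \<Rightarrow> ('k \<Rightarrow> 'b::ring_1) \<Rightarrow> ('b \<Rightarrow> 'a) \<Rightarrow> ('b, 'a, 'y) bimod \<Rightarrow> bool" where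
  "inverse_of_modulation iA iB f Y \<longleftrightarrow> is_bimod iB iA Y \<and>
     bimod_iso (tensor (modulation f) Y) (modulation (id :: 'a \<Rightarrow> 'a)) \<and>
     bimod_iso (tensor Y (modulation f)) (modulation (id :: 'b \<Rightarrow> 'b))"

end

theory Submission
  imports Defs "HOL-Library.Function_Algebras"
begin

(* For ring maps f and g, A\<^sub>f \<otimes>\<^sub>B B\<^sub>g \<cong> A\<^sub>f\<^sub>\<circ>\<^sub>g via x \<otimes> y \<mapsto> x f(y); so if f is bijective, then B\<^sub>f\<^sub>\<inverse>
   is an inverse of A\<^sub>f.

   Conversely, let \<epsilon> : A\<^sub>f \<otimes>\<^sub>B Y \<cong> A and \<theta> : Y \<otimes>\<^sub>A A\<^sub>f \<cong> B. The right B-action on Y \<otimes>\<^sub>A A\<^sub>f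
   factors through f, so \<theta>(t b) = \<theta>(t) b makes f injective. For a \<in> A, right multiplication
   by a in the second factor is a left B-linear endomorphism of Y \<otimes>\<^sub>A A\<^sub>f \<cong> B, hence right
   multiplication by some b \<in> B, and so y \<otimes> a = y \<otimes> f(b) for all y. The balanced map
   y \<otimes> x \<mapsto> k(y) x with k(y) = \<epsilon>(1 \<otimes> y) gives k(y) a = k(y) f(b), and writing
   1 = \<epsilon>(\<Sum> x\<^sub>i \<otimes> y\<^sub>i) = \<Sum> x\<^sub>i k(y\<^sub>i) yields a = f(b). *)

(* The induction method eta-expands its goals, and evaluating the expanded formal sums pointwise
   would destroy terms such as \<phi> + delta p; pointwise evaluation is therefore only used explicitly. *)
declare zero_fun_apply [simp del] plus_fun_apply [simp del] minus_apply [simp del] uminus_apply [simp del]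

abbreviation spt :: "('z \<Rightarrow> int) \<Rightarrow> 'z set" where
  "spt \<phi> \<equiv> {p. \<phi> p \<noteq> 0}"

lemma spt_delta [simp]: "spt (delta z) = {z}"
  by (auto simp: delta_def)

lemma spt_add_subset: "spt (\<phi> + \<psi>) \<subseteq> spt \<phi> \<union> spt \<psi>"
  by (auto simp: plus_fun_apply)

lemma spt_diff_subset: "spt (\<phi> - \<psi>) \<subseteq> spt \<phi> \<union> spt \<psi>"
  by (auto simp: minus_apply)

lemma finite_spt_add [simp]: "finite (spt \<phi>) \<Longrightarrow> finite (spt \<psi>) \<Longrightarrow> finite (spt (\<phi> + \<psi>))"
  by (rule finite_subset[OF spt_add_subset]) simp

lemma finite_spt_diff [simp]: "finite (spt \<phi>) \<Longrightarrow> finite (spt \<psi>) \<Longrightarrow> finite (spt (\<phi> - \<psi>))"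
  by (rule finite_subset[OF spt_diff_subset]) simp

lemma finite_support_add_multiple:
  fixes \<phi> :: "'z \<Rightarrow> int"
  assumes "finite (spt \<phi>)" and "spt \<phi> \<subseteq> S" and "p \<in> S" and "Q \<phi>"
    and add: "\<And>\<phi> p. finite (spt \<phi>) \<Longrightarrow> spt \<phi> \<subseteq> S \<Longrightarrow> p \<in> S \<Longrightarrow> Q \<phi> \<Longrightarrow> Q (\<phi> + delta p)"
    and diff: "\<And>\<phi> p. finite (spt \<phi>) \<Longrightarrow> spt \<phi> \<subseteq> S \<Longrightarrow> p \<in> S \<Longrightarrow> Q \<phi> \<Longrightarrow> Q (\<phi> - delta p)"
  shows "Q (\<phi> + (\<lambda>q. c * delta p q))"
proof -
  define m where "m c = \<phi> + (\<lambda>q. c * delta p q)" for c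
  have "spt (m c) \<subseteq> insert p (spt \<phi>)" for c
    by (auto simp: m_def delta_def plus_fun_apply)
  then have fin: "finite (spt (m c))" and sub: "spt (m c) \<subseteq> S" for c
    using assms(1-3) by (auto intro: finite_subset)
  have "Q (m c)"
  proof (induction c rule: int_induct[where k = 0])
    case base
    then show ?case using \<open>Q \<phi>\<close> by (simp add: m_def flip: zero_fun_def)
  next
    case (step1 c)
    have "m (c + 1) = m c + delta p"
      by (simp add: m_def fun_eq_iff plus_fun_apply algebra_simps)
    with add[OF fin sub \<open>p \<in> S\<close> step1(2)] show ?case by (simp only:)
  next
    case (step2 c)
    have "m (c - 1) = m c - delta p"
      by (simp add: m_def fun_eq_iff plus_fun_apply minus_apply algebra_simps)
    with diff[OF fin sub \<open>p \<in> S\<close> step2(2)] show ?case by (simp only:)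
  qed
  then show ?thesis by (simp add: m_def)
qed

lemma finite_support_induct [consumes 2, case_names zero add diff]:
  fixes \<psi> :: "'z \<Rightarrow> int"
  assumes "finite (spt \<psi>)" and "spt \<psi> \<subseteq> S" and zero: "Q 0"
    and add: "\<And>\<phi> p. finite (spt \<phi>) \<Longrightarrow> spt \<phi> \<subseteq> S \<Longrightarrow> p \<in> S \<Longrightarrow> Q \<phi> \<Longrightarrow> Q (\<phi> + delta p)"
    and diff: "\<And>\<phi> p. finite (spt \<phi>) \<Longrightarrow> spt \<phi> \<subseteq> S \<Longrightarrow> p \<in> S \<Longrightarrow> Q \<phi> \<Longrightarrow> Q (\<phi> - delta p)"
  shows "Q \<psi>"
proof -
  have "Q \<psi>" if "finite F" and "spt \<psi> = F" and "F \<subseteq> S" for F \<psi>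
    using that
  proof (induction F arbitrary: \<psi> rule: finite_induct)
    case empty
    then have "\<psi> = 0" by (auto simp: zero_fun_apply)
    then show ?case using zero by simp
  next
    case (insert p F)
    define \<phi> where "\<phi> = \<psi>(p := 0)"
    have "spt \<phi> = F"
      using insert.prems(1) insert.hyps(2) by (auto simp: \<phi>_def)
    moreover have "Q \<phi>"
      using insert.IH \<open>spt \<phi> = F\<close> insert.prems(2) by blast
    ultimately have "Q (\<phi> + (\<lambda>q. \<psi> p * delta p q))"
      using insert.hyps(1) insert.prems(2) by (intro finite_support_add_multiple[OF _ _ _ _ add diff]) auto
    moreover have "\<psi> = \<phi> + (\<lambda>q. \<psi> p * delta p q)"
      by (auto simp: \<phi>_def delta_def plus_fun_apply)
    ultimately show ?case by metis
  qed
  then show ?thesis using assms(1,2) by blast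
qed

definition lin_ext :: "('z \<Rightarrow> 'r::ring_1) \<Rightarrow> ('z \<Rightarrow> int) \<Rightarrow> 'r" where
  "lin_ext \<mu> \<phi> = (\<Sum>p\<in>spt \<phi>. of_int (\<phi> p) * \<mu> p)"

lemma lin_ext_eq_sum:
  "finite F \<Longrightarrow> spt \<phi> \<subseteq> F \<Longrightarrow> lin_ext \<mu> \<phi> = (\<Sum>p\<in>F. of_int (\<phi> p) * \<mu> p)"
  unfolding lin_ext_def by (rule sum.mono_neutral_left) auto

lemma lin_ext_zero [simp]: "lin_ext \<mu> 0 = 0"
  by (simp add: lin_ext_def zero_fun_apply)

lemma lin_ext_delta [simp]: "lin_ext \<mu> (delta z) = \<mu> z"
  by (simp add: lin_ext_def delta_def)

lemma lin_ext_add: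
  assumes "finite (spt \<phi>)" and "finite (spt \<psi>)"
  shows "lin_ext \<mu> (\<phi> + \<psi>) = lin_ext \<mu> \<phi> + lin_ext \<mu> \<psi>"
  using assms spt_add_subset[of \<phi> \<psi>]
  by (simp add: lin_ext_eq_sum[where F = "spt \<phi> \<union> spt \<psi>"] sum.distrib distrib_right plus_fun_apply)

lemma lin_ext_diff:
  assumes "finite (spt \<phi>)" and "finite (spt \<psi>)"
  shows "lin_ext \<mu> (\<phi> - \<psi>) = lin_ext \<mu> \<phi> - lin_ext \<mu> \<psi>"
  using assms spt_diff_subset[of \<phi> \<psi>]
  by (simp add: lin_ext_eq_sum[where F = "spt \<phi> \<union> spt \<psi>"] sum_subtractf left_diff_distrib minus_apply)

lemma lin_ext_cong: "(\<And>p. \<phi> p \<noteq> 0 \<Longrightarrow> \<mu> p = \<nu> p) \<Longrightarrow> lin_ext \<mu> \<phi> = lin_ext \<nu> \<phi>"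
  unfolding lin_ext_def by (rule sum.cong) auto

lemma lin_ext_mult_left: "lin_ext (\<lambda>p. a * \<mu> p) \<phi> = a * lin_ext \<mu> \<phi>"
  unfolding lin_ext_def sum_distrib_left
  by (rule sum.cong[OF refl]) (metis mult.assoc mult_of_int_commute)

lemma lin_ext_mult_right: "lin_ext (\<lambda>p. \<mu> p * c) \<phi> = lin_ext \<mu> \<phi> * c"
  unfolding lin_ext_def sum_distrib_right by (simp add: mult.assoc)

lemma push_eq_sum:
  "finite F \<Longrightarrow> spt \<phi> \<subseteq> F \<Longrightarrow> push g \<phi> q = (\<Sum>p\<in>{p\<in>F. g p = q}. \<phi> p)"
  unfolding push_def by (rule sum.mono_neutral_left) auto

lemma push_add:
  assumes "finite (spt \<phi>)" and "finite (spt \<psi>)"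
  shows "push g (\<phi> + \<psi>) = push g \<phi> + push g \<psi>"
  using assms spt_add_subset[of \<phi> \<psi>]
  by (simp add: fun_eq_iff push_eq_sum[where F = "spt \<phi> \<union> spt \<psi>"] sum.distrib plus_fun_apply)

lemma push_diff:
  assumes "finite (spt \<phi>)" and "finite (spt \<psi>)"
  shows "push g (\<phi> - \<psi>) = push g \<phi> - push g \<psi>"
  using assms spt_diff_subset[of \<phi> \<psi>]
  by (simp add: fun_eq_iff push_eq_sum[where F = "spt \<phi> \<union> spt \<psi>"] sum_subtractf minus_apply)

lemma push_delta [simp]: "push g (delta z) = delta (g z)"
proof
  fix q
  have "{p \<in> {z}. g p = q} = (if g z = q then {z} else {})"
    by auto
  then show "push g (delta z) q = delta (g z) q"
    by (simp add: push_eq_sum[where F = "{z}"] delta_def)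
qed

lemma spt_push_subset: "spt (push g \<phi>) \<subseteq> g ` spt \<phi>"
  by (fastforce simp: push_def dest: sum.not_neutral_contains_not_neutral)

lemma finite_spt_push [simp]: "finite (spt \<phi>) \<Longrightarrow> finite (spt (push g \<phi>))"
  using spt_push_subset by (metis finite_imageI finite_subset)

lemma lin_ext_push:
  assumes "finite (spt \<phi>)"
  shows "lin_ext \<mu> (push g \<phi>) = lin_ext (\<lambda>p. \<mu> (g p)) \<phi>"
  using assms subset_UNIV
proof (induction rule: finite_support_induct)
  case zero
  then show ?case by (simp add: push_def zero_fun_def lin_ext_def)
next
  case (add \<phi> p)
  then show ?case by (simp add: push_add lin_ext_add)
next
  case (diff \<phi> p)
  then show ?case by (simp add: push_diff lin_ext_diff)
qed

lemma push_push:
  assumes "finite (spt \<phi>)"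
  shows "push g (push g' \<phi>) = push (g \<circ> g') \<phi>"
  using assms subset_UNIV
proof (induction rule: finite_support_induct)
  case zero
  then show ?case by (simp add: push_def zero_fun_def)
next
  case (add \<phi> p)
  then show ?case by (simp add: push_add)
next
  case (diff \<phi> p)
  then show ?case by (simp add: push_diff)
qed

lemma tens_rel_zero: "0 \<in> tens_rel X Y"
  using tr_zero by (simp add: zero_fun_def)

lemma tens_rel_diff: "r \<in> tens_rel X Y \<Longrightarrow> s \<in> tens_rel X Y \<Longrightarrow> r - s \<in> tens_rel X Y"
  using tr_diff by (simp add: fun_diff_def)

lemma tens_rel_uminus: "r \<in> tens_rel X Y \<Longrightarrow> - r \<in> tens_rel X Y"
  using tens_rel_diff[OF tens_rel_zero] by fastforce

lemma tens_rel_add: "r \<in> tens_rel X Y \<Longrightarrow> s \<in> tens_rel X Y \<Longrightarrow> r + s \<in> tens_rel X Y"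
  using tens_rel_diff[of r X Y "- s"] tens_rel_uminus by fastforce

lemma tens_rel_addl:
  "x \<in> bcar X \<Longrightarrow> x' \<in> bcar X \<Longrightarrow> y \<in> bcar Y \<Longrightarrow>
     delta (badd X x x', y) - delta (x, y) - delta (x', y) \<in> tens_rel X Y"
  using tr_addl by (simp add: fun_diff_def)

lemma tens_rel_addr:
  "x \<in> bcar X \<Longrightarrow> y \<in> bcar Y \<Longrightarrow> y' \<in> bcar Y \<Longrightarrow>
     delta (x, badd Y y y') - delta (x, y) - delta (x, y') \<in> tens_rel X Y"
  using tr_addr by (simp add: fun_diff_def)

lemma tens_rel_bal:
  "x \<in> bcar X \<Longrightarrow> y \<in> bcar Y \<Longrightarrow> delta (ract X x b, y) - delta (x, lact Y b y) \<in> tens_rel X Y"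
  using tr_bal by (simp add: fun_diff_def)

lemma tens_rel_induct [consumes 1, case_names zero addl addr bal diff]:
  assumes "r \<in> tens_rel X Y"
    and "P 0"
    and "\<And>x x' y. x \<in> bcar X \<Longrightarrow> x' \<in> bcar X \<Longrightarrow> y \<in> bcar Y \<Longrightarrow>
           P (delta (badd X x x', y) - delta (x, y) - delta (x', y))"
    and "\<And>x y y'. x \<in> bcar X \<Longrightarrow> y \<in> bcar Y \<Longrightarrow> y' \<in> bcar Y \<Longrightarrow>
           P (delta (x, badd Y y y') - delta (x, y) - delta (x, y'))"
    and "\<And>x y b. x \<in> bcar X \<Longrightarrow> y \<in> bcar Y \<Longrightarrow> P (delta (ract X x b, y) - delta (x, lact Y b y))"
    and "\<And>r s. r \<in> tens_rel X Y \<Longrightarrow> s \<in> tens_rel X Y \<Longrightarrow> P r \<Longrightarrow> P s \<Longrightarrow> P (r - s)"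
  shows "P r"
  using assms(1)
  by (induction rule: tens_rel.induct) (use assms(2-) in \<open>simp_all add: fun_diff_def zero_fun_def\<close>)

lemma finite_spt_tens_rel: "r \<in> tens_rel X Y \<Longrightarrow> finite (spt r)"
  by (induction rule: tens_rel_induct) (simp_all add: zero_fun_apply)

definition right_endo :: "('a, 'b, 'x) bimod \<Rightarrow> ('x \<Rightarrow> 'x) \<Rightarrow> bool" where
  "right_endo X g \<longleftrightarrow> (\<forall>x\<in>bcar X. g x \<in> bcar X) \<and>
     (\<forall>x\<in>bcar X. \<forall>x'\<in>bcar X. g (badd X x x') = badd X (g x) (g x')) \<and>
     (\<forall>x\<in>bcar X. \<forall>b. g (ract X x b) = ract X (g x) b)"

definition left_endo :: "('b, 'c, 'y) bimod \<Rightarrow> ('y \<Rightarrow> 'y) \<Rightarrow> bool" where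
  "left_endo Y g \<longleftrightarrow> (\<forall>y\<in>bcar Y. g y \<in> bcar Y) \<and>
     (\<forall>y\<in>bcar Y. \<forall>y'\<in>bcar Y. g (badd Y y y') = badd Y (g y) (g y')) \<and>
     (\<forall>y\<in>bcar Y. \<forall>b. g (lact Y b y) = lact Y b (g y))"

lemma right_endo_id: "right_endo X (\<lambda>x. x)"
  by (simp add: right_endo_def)

lemma left_endo_id: "left_endo Y (\<lambda>y. y)"
  by (simp add: left_endo_def)

lemma right_endo_lact: "is_bimod iA iB X \<Longrightarrow> right_endo X (lact X a)"
  by (simp add: right_endo_def is_bimod_def)

lemma left_endo_ract: "is_bimod iB iC Y \<Longrightarrow> left_endo Y (\<lambda>y. ract Y y c)"
  by (simp add: left_endo_def is_bimod_def)

lemma push_tens_rel: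
  assumes gx: "right_endo X gx" and gy: "left_endo Y gy" and "r \<in> tens_rel X Y"
  shows "push (\<lambda>(x, y). (gx x, gy y)) r \<in> tens_rel X Y"
  using \<open>r \<in> tens_rel X Y\<close>
proof (induction rule: tens_rel_induct)
  case zero
  show ?case using tens_rel_zero by (simp add: push_def zero_fun_def)
next
  case (addl x x' y)
  then show ?case
    using tens_rel_addl[of "gx x" X "gx x'" "gy y" Y] gx gy
    by (simp add: push_diff right_endo_def left_endo_def)
next
  case (addr x y y')
  then show ?case
    using tens_rel_addr[of "gx x" X "gy y" Y "gy y'"] gx gy
    by (simp add: push_diff right_endo_def left_endo_def)
next
  case (bal x y b)
  then show ?case
    using tens_rel_bal[of "gx x" X "gy y" Y b] gx gy
    by (simp add: push_diff right_endo_def left_endo_def)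
next
  case (diff r s)
  then show ?case
    by (simp add: push_diff finite_spt_tens_rel tens_rel_diff)
qed

definition balanced_map ::
  "('a, 'b, 'x) bimod \<Rightarrow> ('b, 'c, 'y) bimod \<Rightarrow> ('x \<times> 'y \<Rightarrow> 'r::ring_1) \<Rightarrow> bool" where
  "balanced_map X Y \<mu> \<longleftrightarrow>
     (\<forall>x\<in>bcar X. \<forall>x'\<in>bcar X. \<forall>y\<in>bcar Y. \<mu> (badd X x x', y) = \<mu> (x, y) + \<mu> (x', y)) \<and>
     (\<forall>x\<in>bcar X. \<forall>y\<in>bcar Y. \<forall>y'\<in>bcar Y. \<mu> (x, badd Y y y') = \<mu> (x, y) + \<mu> (x, y')) \<and>
     (\<forall>x\<in>bcar X. \<forall>y\<in>bcar Y. \<forall>b. \<mu> (ract X x b, y) = \<mu> (x, lact Y b y))"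

lemma lin_ext_tens_rel:
  assumes "balanced_map X Y \<mu>" and "r \<in> tens_rel X Y"
  shows "lin_ext \<mu> r = 0"
  using \<open>r \<in> tens_rel X Y\<close>
proof (induction rule: tens_rel_induct)
  case (diff r s)
  then show ?case by (simp add: lin_ext_diff finite_spt_tens_rel)
qed (use assms(1) in \<open>simp_all add: balanced_map_def lin_ext_diff\<close>)

lemma mem_tcls_iff: "\<psi> \<in> tcls X Y \<phi> \<longleftrightarrow> \<psi> - \<phi> \<in> tens_rel X Y"
  by (simp add: tcls_def fun_diff_def)

lemma tcls_self: "\<phi> \<in> tcls X Y \<phi>"
  by (simp add: mem_tcls_iff tens_rel_zero)

lemma tcls_eq_iff: "tcls X Y \<phi> = tcls X Y \<psi> \<longleftrightarrow> \<phi> - \<psi> \<in> tens_rel X Y"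
proof
  assume "tcls X Y \<phi> = tcls X Y \<psi>"
  then show "\<phi> - \<psi> \<in> tens_rel X Y"
    using tcls_self[of \<phi> X Y] by (simp add: mem_tcls_iff)
next
  assume rel: "\<phi> - \<psi> \<in> tens_rel X Y"
  have "\<chi> - \<psi> \<in> tens_rel X Y \<longleftrightarrow> \<chi> - \<phi> \<in> tens_rel X Y" for \<chi>
    using tens_rel_add[OF _ rel, of "\<chi> - \<phi>"] tens_rel_diff[OF _ rel, of "\<chi> - \<psi>"] by auto
  then show "tcls X Y \<phi> = tcls X Y \<psi>"
    by (auto simp: mem_tcls_iff)
qed

lemma formal_sums_iff: "\<phi> \<in> formal_sums X Y \<longleftrightarrow> finite (spt \<phi>) \<and> spt \<phi> \<subseteq> bcar X \<times> bcar Y"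
  by (auto simp: formal_sums_def)

lemma zero_in_formal_sums: "0 \<in> formal_sums X Y"
  by (simp add: formal_sums_iff zero_fun_apply)

lemma delta_in_formal_sums: "x \<in> bcar X \<Longrightarrow> y \<in> bcar Y \<Longrightarrow> delta (x, y) \<in> formal_sums X Y"
  by (simp add: formal_sums_iff)

lemma diff_in_formal_sums:
  "\<phi> \<in> formal_sums X Y \<Longrightarrow> \<psi> \<in> formal_sums X Y \<Longrightarrow> \<phi> - \<psi> \<in> formal_sums X Y"
  using spt_diff_subset[of \<phi> \<psi>] by (auto simp: formal_sums_iff)

lemma push_in_formal_sums:
  assumes "\<phi> \<in> formal_sums X Y" and "\<And>x y. x \<in> bcar X \<Longrightarrow> y \<in> bcar Y \<Longrightarrow> g (x, y) \<in> bcar X \<times> bcar Y"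
  shows "push g \<phi> \<in> formal_sums X Y"
  using assms spt_push_subset[of g \<phi>] by (fastforce simp: formal_sums_iff)

lemma formal_sums_induct [consumes 1, case_names zero add diff]:
  assumes "\<psi> \<in> formal_sums X Y" and "Q 0"
    and "\<And>\<phi> x y. \<phi> \<in> formal_sums X Y \<Longrightarrow> x \<in> bcar X \<Longrightarrow> y \<in> bcar Y \<Longrightarrow> Q \<phi> \<Longrightarrow>
           Q (\<phi> + delta (x, y))"
    and "\<And>\<phi> x y. \<phi> \<in> formal_sums X Y \<Longrightarrow> x \<in> bcar X \<Longrightarrow> y \<in> bcar Y \<Longrightarrow> Q \<phi> \<Longrightarrow>
           Q (\<phi> - delta (x, y))"
  shows "Q \<psi>"
proof -
  have "finite (spt \<psi>)" and "spt \<psi> \<subseteq> bcar X \<times> bcar Y"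
    using assms(1) by (simp_all add: formal_sums_iff)
  then show ?thesis
  proof (induction rule: finite_support_induct)
    case zero
    show ?case by (rule assms(2))
  next
    case (add \<phi> p)
    then show ?case
      using assms(3)[of \<phi> "fst p" "snd p"] by (auto simp: formal_sums_iff)
  next
    case (diff \<phi> p)
    then show ?case
      using assms(4)[of \<phi> "fst p" "snd p"] by (auto simp: formal_sums_iff)
  qed
qed

lemma tensor_carrier: "bcar (tensor X Y) = tcls X Y ` formal_sums X Y"
  by (simp add: tensor_def)

lemma tensor_carrierE:
  assumes "S \<in> bcar (tensor X Y)"
  obtains \<phi> where "S = tcls X Y \<phi>" and "\<phi> \<in> formal_sums X Y"
  using assms by (auto simp: tensor_carrier)

lemma tcls_in_tensor: "\<phi> \<in> formal_sums X Y \<Longrightarrow> tcls X Y \<phi> \<in> bcar (tensor X Y)"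
  by (simp add: tensor_carrier)

lemma finite_spt_mem_tcls: "\<psi> \<in> tcls X Y \<phi> \<Longrightarrow> finite (spt \<phi>) \<Longrightarrow> finite (spt \<psi>)"
  using finite_spt_add[OF finite_spt_tens_rel] by (fastforce simp: mem_tcls_iff)

lemma UN_tcls:
  assumes "\<And>\<phi>'. \<phi>' \<in> tcls X Y \<phi> \<Longrightarrow> F \<phi>' = C"
  shows "(\<Union>\<phi>'\<in>tcls X Y \<phi>. F \<phi>') = C"
  using assms tcls_self[of \<phi> X Y] by blast

lemma tensor_badd_tcls: "badd (tensor X Y) (tcls X Y \<phi>) (tcls X Y \<psi>) = tcls X Y (\<phi> + \<psi>)"
proof -
  have "tcls X Y (\<phi>' + \<psi>') = tcls X Y (\<phi> + \<psi>)"
    if "\<phi>' \<in> tcls X Y \<phi>" and "\<psi>' \<in> tcls X Y \<psi>" for \<phi>' \<psi>'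
  proof -
    have "(\<phi>' + \<psi>') - (\<phi> + \<psi>) = (\<phi>' - \<phi>) + (\<psi>' - \<psi>)"
      by simp
    also have "\<dots> \<in> tens_rel X Y"
      using that by (intro tens_rel_add) (simp_all add: mem_tcls_iff)
    finally show ?thesis
      by (simp add: tcls_eq_iff)
  qed
  then have "(\<Union>\<phi>'\<in>tcls X Y \<phi>. \<Union>\<psi>'\<in>tcls X Y \<psi>. tcls X Y (\<phi>' + \<psi>')) = tcls X Y (\<phi> + \<psi>)"
    by (intro UN_tcls) simp
  then show ?thesis
    by (simp add: tensor_def plus_fun_def)
qed

definition tensor_map ::
  "('a, 'b, 'x) bimod \<Rightarrow> ('b, 'c, 'y) bimod \<Rightarrow> ('x \<times> 'y \<Rightarrow> 'x \<times> 'y) \<Rightarrow>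
     ('x \<times> 'y \<Rightarrow> int) set \<Rightarrow> ('x \<times> 'y \<Rightarrow> int) set" where
  "tensor_map X Y g S = (\<Union>\<phi>\<in>S. tcls X Y (push g \<phi>))"

lemma lact_tensor: "lact (tensor X Y) a = tensor_map X Y (\<lambda>(x, y). (lact X a x, y))"
  by (simp add: tensor_def tensor_map_def fun_eq_iff)

lemma ract_tensor: "ract (tensor X Y) S c = tensor_map X Y (\<lambda>(x, y). (x, ract Y y c)) S"
  by (simp add: tensor_def tensor_map_def)

lemma tensor_map_tcls:
  assumes "right_endo X gx" and "left_endo Y gy" and "finite (spt \<phi>)"
  shows "tensor_map X Y (\<lambda>(x, y). (gx x, gy y)) (tcls X Y \<phi>) =
    tcls X Y (push (\<lambda>(x, y). (gx x, gy y)) \<phi>)"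
  unfolding tensor_map_def
proof (rule UN_tcls)
  fix \<phi>' assume "\<phi>' \<in> tcls X Y \<phi>"
  then have "push (\<lambda>(x, y). (gx x, gy y)) (\<phi>' - \<phi>) \<in> tens_rel X Y"
    using assms(1,2) push_tens_rel by (simp add: mem_tcls_iff)
  then show "tcls X Y (push (\<lambda>(x, y). (gx x, gy y)) \<phi>') = tcls X Y (push (\<lambda>(x, y). (gx x, gy y)) \<phi>)"
    using finite_spt_mem_tcls[OF \<open>\<phi>' \<in> tcls X Y \<phi>\<close> assms(3)] assms(3)
    by (simp add: tcls_eq_iff push_diff)
qed

lemma tensor_map_in_tensor:
  assumes "right_endo X gx" and "left_endo Y gy" and "S \<in> bcar (tensor X Y)"
  shows "tensor_map X Y (\<lambda>(x, y). (gx x, gy y)) S \<in> bcar (tensor X Y)"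
proof -
  obtain \<phi> where S: "S = tcls X Y \<phi>" and \<phi>: "\<phi> \<in> formal_sums X Y"
    using assms(3) by (rule tensor_carrierE)
  have "push (\<lambda>(x, y). (gx x, gy y)) \<phi> \<in> formal_sums X Y"
    using \<phi> assms(1,2) by (auto intro!: push_in_formal_sums simp: right_endo_def left_endo_def)
  then show ?thesis
    using \<phi> assms(1,2) by (simp add: S tensor_map_tcls formal_sums_iff tcls_in_tensor)
qed

definition tensor_lift :: "('x \<times> 'y \<Rightarrow> 'r::ring_1) \<Rightarrow> ('x \<times> 'y \<Rightarrow> int) set \<Rightarrow> 'r" where
  "tensor_lift \<mu> S = lin_ext \<mu> (SOME \<phi>. \<phi> \<in> S)"

lemma tensor_lift_tcls:
  assumes "balanced_map X Y \<mu>" and "finite (spt \<phi>)"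
  shows "tensor_lift \<mu> (tcls X Y \<phi>) = lin_ext \<mu> \<phi>"
proof -
  define \<psi> where "\<psi> = (SOME \<psi>. \<psi> \<in> tcls X Y \<phi>)"
  have "\<psi> \<in> tcls X Y \<phi>"
    unfolding \<psi>_def by (rule someI[of _ \<phi>]) (rule tcls_self)
  then have "lin_ext \<mu> \<psi> - lin_ext \<mu> \<phi> = lin_ext \<mu> (\<psi> - \<phi>)"
    using assms(2) by (simp add: lin_ext_diff finite_spt_mem_tcls)
  also have "\<dots> = 0"
    using \<open>\<psi> \<in> tcls X Y \<phi>\<close> assms(1) by (simp add: mem_tcls_iff lin_ext_tens_rel)
  finally show ?thesis
    by (simp add: tensor_lift_def \<psi>_def)
qed

lemma modulation_simps [simp]:
  "bcar (modulation f) = UNIV" "badd (modulation f) = (+)"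
  "lact (modulation f) a x = a * x" "ract (modulation f) x b = x * f b"
  by (simp_all add: modulation_def)

lemma right_endo_modulation: "right_endo (modulation f) (\<lambda>x. a * x)"
  by (simp add: right_endo_def algebra_simps)

lemma left_endo_modulation: "left_endo (modulation f) (\<lambda>x. x * c)"
  by (simp add: left_endo_def algebra_simps)

context
  fixes f :: "'b::ring_1 \<Rightarrow> 'a::ring_1" and g :: "'c \<Rightarrow> 'b"
  assumes f_add: "\<And>x y. f (x + y) = f x + f y" and f_mult: "\<And>x y. f (x * y) = f x * f y"
    and f_one: "f 1 = 1"
begin

lemma balanced_map_modulation: "balanced_map (modulation f) (modulation g) (\<lambda>(x, y). x * f y)"
  by (simp add: balanced_map_def f_add f_mult algebra_simps)

lemma tcls_modulation_eq_pure:
  assumes "\<phi> \<in> formal_sums (modulation f) (modulation g)"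
  shows "tcls (modulation f) (modulation g) \<phi> =
    tcls (modulation f) (modulation g) (delta (lin_ext (\<lambda>(x, y). x * f y) \<phi>, 1))"
proof -
  let ?R = "tens_rel (modulation f) (modulation g)"
  have pure: "delta (x, y) - delta (x * f y, 1) \<in> ?R" for x y
    using tens_rel_uminus[OF tens_rel_bal[of x "modulation f" 1 "modulation g" y]] by simp
  have sum: "delta (m + n, 1) - delta (m, 1) - delta (n, 1) \<in> ?R" for m n
    using tens_rel_addl[of m "modulation f" n 1 "modulation g"] by simp
  have "\<phi> - delta (lin_ext (\<lambda>(x, y). x * f y) \<phi>, 1) \<in> ?R"
    using assms
  proof (induction rule: formal_sums_induct)
    case zero
    show ?case
      using sum[of 0 0] by simp
  next
    case (add \<phi> x y)
    let ?m = "lin_ext (\<lambda>(x, y). x * f y) \<phi>" and ?n = "x * f y"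
    have "(\<phi> + delta (x, y)) - delta (?m + ?n, 1) =
        (\<phi> - delta (?m, 1)) + (delta (x, y) - delta (?n, 1)) - (delta (?m + ?n, 1) - delta (?m, 1) - delta (?n, 1))"
      by (simp add: algebra_simps)
    also have "\<dots> \<in> ?R"
      by (rule tens_rel_diff[OF tens_rel_add[OF add.IH pure] sum])
    finally show ?case
      using add.hyps(1) by (simp add: lin_ext_add formal_sums_iff)
  next
    case (diff \<phi> x y)
    let ?m = "lin_ext (\<lambda>(x, y). x * f y) \<phi>" and ?n = "x * f y"
    have "(\<phi> - delta (x, y)) - delta (?m - ?n, 1) =
        (\<phi> - delta (?m, 1)) - (delta (x, y) - delta (?n, 1)) + (delta (?m - ?n + ?n, 1) - delta (?m - ?n, 1) - delta (?n, 1))"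
      by (simp add: algebra_simps)
    also have "\<dots> \<in> ?R"
      by (rule tens_rel_add[OF tens_rel_diff[OF diff.IH pure] sum])
    finally show ?case
      using diff.hyps(1) by (simp add: lin_ext_diff formal_sums_iff)
  qed
  then show ?thesis
    by (simp add: tcls_eq_iff)
qed

lemma bij_tensor_lift_modulation:
  "bij_betw (tensor_lift (\<lambda>(x, y). x * f y)) (bcar (tensor (modulation f) (modulation g))) UNIV"
  unfolding bij_betw_def
proof
  let ?X = "modulation f" and ?Y = "modulation g" and ?\<mu> = "\<lambda>(x, y). x * f y"
  note h_tcls = tensor_lift_tcls[OF balanced_map_modulation]
  show "inj_on (tensor_lift ?\<mu>) (bcar (tensor ?X ?Y))"
  proof (rule inj_onI)
    fix S T
    assume "S \<in> bcar (tensor ?X ?Y)" "T \<in> bcar (tensor ?X ?Y)" "tensor_lift ?\<mu> S = tensor_lift ?\<mu> T"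
    then obtain \<phi> \<psi> where S: "S = tcls ?X ?Y \<phi>" and \<phi>: "\<phi> \<in> formal_sums ?X ?Y"
      and T: "T = tcls ?X ?Y \<psi>" and \<psi>: "\<psi> \<in> formal_sums ?X ?Y"
      and "lin_ext ?\<mu> \<phi> = lin_ext ?\<mu> \<psi>"
      by (metis tensor_carrierE h_tcls formal_sums_iff)
    then show "S = T"
      by (simp add: S T tcls_modulation_eq_pure[OF \<phi>] tcls_modulation_eq_pure[OF \<psi>])
  qed
  have "m = tensor_lift ?\<mu> (tcls ?X ?Y (delta (m, 1)))" for m
    using h_tcls[of "delta (m, 1)"] by (simp add: f_one)
  then show "tensor_lift ?\<mu> ` bcar (tensor ?X ?Y) = UNIV"
    by (auto intro!: image_eqI tcls_in_tensor delta_in_formal_sums)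
qed

lemma tensor_modulation_iso: "bimod_iso (tensor (modulation f) (modulation g)) (modulation (f \<circ> g))"
proof -
  let ?X = "modulation f" and ?Y = "modulation g" and ?\<mu> = "\<lambda>(x, y). x * f y"
  note h_tcls = tensor_lift_tcls[OF balanced_map_modulation]
  show ?thesis
    unfolding bimod_iso_def
  proof (intro exI[of _ "tensor_lift ?\<mu>"] conjI ballI allI)
    show "bij_betw (tensor_lift ?\<mu>) (bcar (tensor ?X ?Y)) (bcar (modulation (f \<circ> g)))"
      using bij_tensor_lift_modulation by simp
  next
    fix S T assume "S \<in> bcar (tensor ?X ?Y)" "T \<in> bcar (tensor ?X ?Y)"
    then show "tensor_lift ?\<mu> (badd (tensor ?X ?Y) S T) = badd (modulation (f \<circ> g)) (tensor_lift ?\<mu> S) (tensor_lift ?\<mu> T)"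
      by (auto elim!: tensor_carrierE simp: tensor_badd_tcls h_tcls lin_ext_add formal_sums_iff)
  next
    fix a S assume "S \<in> bcar (tensor ?X ?Y)"
    then obtain \<phi> where S: "S = tcls ?X ?Y \<phi>" and fin: "finite (spt \<phi>)"
      by (metis tensor_carrierE formal_sums_iff)
    have "lact (tensor ?X ?Y) a S = tcls ?X ?Y (push (\<lambda>(x, y). (a * x, y)) \<phi>)"
      using tensor_map_tcls[OF right_endo_modulation left_endo_id fin] by (simp add: S lact_tensor)
    moreover have "lin_ext ?\<mu> (push (\<lambda>(x, y). (a * x, y)) \<phi>) = lin_ext (\<lambda>p. a * ?\<mu> p) \<phi>"
      using fin by (simp add: lin_ext_push case_prod_beta mult.assoc)
    ultimately show "tensor_lift ?\<mu> (lact (tensor ?X ?Y) a S) = lact (modulation (f \<circ> g)) a (tensor_lift ?\<mu> S)"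
      using fin by (simp add: S h_tcls lin_ext_mult_left)
  next
    fix S c assume "S \<in> bcar (tensor ?X ?Y)"
    then obtain \<phi> where S: "S = tcls ?X ?Y \<phi>" and fin: "finite (spt \<phi>)"
      by (metis tensor_carrierE formal_sums_iff)
    have "ract (tensor ?X ?Y) S c = tcls ?X ?Y (push (\<lambda>(x, y). (x, y * g c)) \<phi>)"
      using tensor_map_tcls[OF right_endo_id left_endo_modulation fin] by (simp add: S ract_tensor)
    moreover have "lin_ext ?\<mu> (push (\<lambda>(x, y). (x, y * g c)) \<phi>) = lin_ext (\<lambda>p. ?\<mu> p * f (g c)) \<phi>"
      using fin by (simp add: lin_ext_push case_prod_beta f_mult mult.assoc)
    ultimately show "tensor_lift ?\<mu> (ract (tensor ?X ?Y) S c) = ract (modulation (f \<circ> g)) (tensor_lift ?\<mu> S) c"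
      using fin by (simp add: S h_tcls lin_ext_mult_right)
  qed
qed

end

lemma tensor_map_commute:
  assumes "right_endo X gx" and "left_endo Y gy" and "S \<in> bcar (tensor X Y)"
  shows "tensor_map X Y (\<lambda>(x, y). (gx x, y)) (tensor_map X Y (\<lambda>(x, y). (x, gy y)) S) =
    tensor_map X Y (\<lambda>(x, y). (x, gy y)) (tensor_map X Y (\<lambda>(x, y). (gx x, y)) S)"
proof -
  obtain \<phi> where S: "S = tcls X Y \<phi>" and fin: "finite (spt \<phi>)"
    using assms(3) by (metis tensor_carrierE formal_sums_iff)
  have "(\<lambda>(x, y). (gx x, y)) \<circ> (\<lambda>(x, y). (x, gy y)) = (\<lambda>(x, y). (x, gy y)) \<circ> (\<lambda>(x, y). (gx x, y))"
    by auto
  then show ?thesis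
    using fin by (simp add: S push_push tensor_map_tcls[OF assms(1) left_endo_id]
      tensor_map_tcls[OF right_endo_id assms(2)])
qed

lemma bimod_iso_regularE:
  fixes M :: "('r::ring_1, 'r, 'm) bimod"
  assumes "bimod_iso M (modulation (id :: 'r \<Rightarrow> 'r))"
  obtains h where "bij_betw h (bcar M) UNIV"
    and "\<And>S T. S \<in> bcar M \<Longrightarrow> T \<in> bcar M \<Longrightarrow> h (badd M S T) = h S + h T"
    and "\<And>a S. S \<in> bcar M \<Longrightarrow> h (lact M a S) = a * h S"
    and "\<And>S b. S \<in> bcar M \<Longrightarrow> h (ract M S b) = h S * b"
  using assms by (auto simp: bimod_iso_def)

lemma inj_if_tensor_modulation_iso:
  fixes f :: "'b::ring_1 \<Rightarrow> 'a::ring_1" and Y :: "('b, 'a, 'y) bimod"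
  assumes "bimod_iso (tensor Y (modulation f)) (modulation (id :: 'b \<Rightarrow> 'b))"
  shows "inj f"
proof
  fix b b' assume "f b = f b'"
  obtain \<theta> where bij: "bij_betw \<theta> (bcar (tensor Y (modulation f))) UNIV"
    and \<theta>_ract: "\<And>S b. S \<in> bcar (tensor Y (modulation f)) \<Longrightarrow>
      \<theta> (ract (tensor Y (modulation f)) S b) = \<theta> S * b"
    using assms by (rule bimod_iso_regularE) blast
  obtain t where t: "t \<in> bcar (tensor Y (modulation f))" and "\<theta> t = 1"
    using bij_betw_imp_surj_on[OF bij] by (metis UNIV_I imageE)
  have "b = \<theta> (ract (tensor Y (modulation f)) t b)"
    using \<theta>_ract[OF t] \<open>\<theta> t = 1\<close> by simp
  also have "ract (tensor Y (modulation f)) t b = ract (tensor Y (modulation f)) t b'"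
    \<comment> \<open>the right action of b on the tensor product only involves f b\<close>
    using \<open>f b = f b'\<close> by (simp add: tensor_def)
  also have "\<theta> \<dots> = b'"
    using \<theta>_ract[OF t] \<open>\<theta> t = 1\<close> by simp
  finally show "b = b'" .
qed

lemma additive_on_tensor_eq_lin_ext:
  fixes h :: "('x \<times> 'y \<Rightarrow> int) set \<Rightarrow> 'r::ring_1"
  assumes add: "\<And>S T. S \<in> bcar (tensor X Y) \<Longrightarrow> T \<in> bcar (tensor X Y) \<Longrightarrow>
      h (badd (tensor X Y) S T) = h S + h T"
    and "\<phi> \<in> formal_sums X Y"
  shows "h (tcls X Y \<phi>) = lin_ext (\<lambda>p. h (tcls X Y (delta p))) \<phi>"
  using \<open>\<phi> \<in> formal_sums X Y\<close>
proof (induction rule: formal_sums_induct)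
  case zero
  have "h (tcls X Y 0) = h (tcls X Y 0) + h (tcls X Y 0)"
    using add[of "tcls X Y 0" "tcls X Y 0"] by (simp add: tensor_badd_tcls tcls_in_tensor zero_in_formal_sums)
  then show ?case by simp
next
  case (add \<phi> x y)
  have "h (tcls X Y (\<phi> + delta (x, y))) = h (tcls X Y \<phi>) + h (tcls X Y (delta (x, y)))"
    using add.hyps assms(1)[of "tcls X Y \<phi>" "tcls X Y (delta (x, y))"]
    by (simp add: tensor_badd_tcls tcls_in_tensor delta_in_formal_sums)
  then show ?case
    using add.hyps(1) add.IH by (simp add: lin_ext_add formal_sums_iff)
next
  case (diff \<phi> x y)
  have "\<phi> - delta (x, y) \<in> formal_sums X Y"
    using diff.hyps by (simp add: diff_in_formal_sums delta_in_formal_sums)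
  then have "h (tcls X Y \<phi>) = h (tcls X Y (\<phi> - delta (x, y))) + h (tcls X Y (delta (x, y)))"
    using diff.hyps assms(1)[of "tcls X Y (\<phi> - delta (x, y))" "tcls X Y (delta (x, y))"]
    by (simp add: tensor_badd_tcls tcls_in_tensor delta_in_formal_sums)
  then show ?case
    using diff.hyps(1) diff.IH by (simp add: lin_ext_diff formal_sums_iff)
qed

lemma left_linear_eq_mult_right:
  fixes h :: "'m \<Rightarrow> 'r::ring_1"
  assumes bij: "bij_betw h (bcar M) UNIV"
    and h_lact: "\<And>a S. S \<in> bcar M \<Longrightarrow> h (lact M a S) = a * h S"
    and lact_closed: "\<And>a S. S \<in> bcar M \<Longrightarrow> lact M a S \<in> bcar M"
    and R_closed: "\<And>S. S \<in> bcar M \<Longrightarrow> R S \<in> bcar M"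
    and R_lact: "\<And>a S. S \<in> bcar M \<Longrightarrow> R (lact M a S) = lact M a (R S)"
    and t: "t \<in> bcar M" "h t = 1" and S: "S \<in> bcar M"
  shows "h (R S) = h S * h (R t)"
proof -
  have "h (lact M (h S) t) = h S"
    using h_lact[OF t(1)] t(2) by simp
  then have "lact M (h S) t = S"
    using bij lact_closed[OF t(1)] S by (auto simp: bij_betw_def dest: inj_onD)
  then have "h (R S) = h (lact M (h S) (R t))"
    using R_lact[OF t(1)] by metis
  also have "\<dots> = h S * h (R t)"
    using h_lact R_closed t(1) by simp
  finally show ?thesis .
qed

lemma tensor_modulation_right_factor_in_image:
  fixes f :: "'b::ring_1 \<Rightarrow> 'a::ring_1" and Y :: "('b, 'a, 'y) bimod"
  assumes Y: "is_bimod iB iA Y"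
    and iso: "bimod_iso (tensor Y (modulation f)) (modulation (id :: 'b \<Rightarrow> 'b))"
  obtains b where "\<And>y. y \<in> bcar Y \<Longrightarrow>
    tcls Y (modulation f) (delta (y, a)) = tcls Y (modulation f) (delta (y, f b))"
proof -
  let ?T = "tensor Y (modulation f)" and ?cls = "tcls Y (modulation f)"
  obtain \<theta> where bij: "bij_betw \<theta> (bcar ?T) UNIV"
    and \<theta>_lact: "\<And>\<beta> S. S \<in> bcar ?T \<Longrightarrow> \<theta> (lact ?T \<beta> S) = \<beta> * \<theta> S"
    and \<theta>_ract: "\<And>S b. S \<in> bcar ?T \<Longrightarrow> \<theta> (ract ?T S b) = \<theta> S * b"
    using iso by (rule bimod_iso_regularE) blast
  obtain t where t: "t \<in> bcar ?T" "\<theta> t = 1"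
    using bij_betw_imp_surj_on[OF bij] by (metis UNIV_I imageE)
  define R where "R = tensor_map Y (modulation f) (\<lambda>(y, x). (y, x * a))"
  have R_closed: "R S \<in> bcar ?T" if "S \<in> bcar ?T" for S
    unfolding R_def using right_endo_id left_endo_modulation that by (rule tensor_map_in_tensor)
  have lact_closed: "lact ?T \<beta> S \<in> bcar ?T" if "S \<in> bcar ?T" for \<beta> S
    unfolding lact_tensor using right_endo_lact[OF Y] left_endo_id that by (rule tensor_map_in_tensor)
  have R_lact: "R (lact ?T \<beta> S) = lact ?T \<beta> (R S)" if "S \<in> bcar ?T" for \<beta> S
    unfolding R_def lact_tensor using right_endo_lact[OF Y] left_endo_modulation that
    by (rule tensor_map_commute[symmetric])
  show thesis
  proof (rule that)
    fix y assume "y \<in> bcar Y"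
    then have S: "?cls (delta (y, 1)) \<in> bcar ?T"
      by (simp add: tcls_in_tensor delta_in_formal_sums)
    have "R (?cls (delta (y, 1))) = ?cls (delta (y, a))"
      using tensor_map_tcls[OF right_endo_id left_endo_modulation, of "delta (y, 1)"] by (simp add: R_def)
    then have "\<theta> (?cls (delta (y, a))) = \<theta> (?cls (delta (y, 1))) * \<theta> (R t)"
      using left_linear_eq_mult_right[OF bij \<theta>_lact lact_closed R_closed R_lact t S] by simp
    also have "\<dots> = \<theta> (ract ?T (?cls (delta (y, 1))) (\<theta> (R t)))"
      using \<theta>_ract[OF S] by simp
    also have "ract ?T (?cls (delta (y, 1))) (\<theta> (R t)) = ?cls (delta (y, f (\<theta> (R t))))"
      using tensor_map_tcls[OF right_endo_id left_endo_modulation, of "delta (y, 1)"] by (simp add: ract_tensor)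
    finally show "?cls (delta (y, a)) = ?cls (delta (y, f (\<theta> (R t))))"
      using bij \<open>y \<in> bcar Y\<close> by (auto simp: bij_betw_def tcls_in_tensor delta_in_formal_sums dest: inj_onD)
  qed
qed

lemma tensor_modulation_additive_eq_lin_ext:
  fixes f :: "'b::ring_1 \<Rightarrow> 'a::ring_1" and Y :: "('b, 'a, 'y) bimod"
  assumes add: "\<And>S T. S \<in> bcar (tensor (modulation f) Y) \<Longrightarrow> T \<in> bcar (tensor (modulation f) Y) \<Longrightarrow>
      \<epsilon> (badd (tensor (modulation f) Y) S T) = \<epsilon> S + \<epsilon> T"
    and lact: "\<And>a S. S \<in> bcar (tensor (modulation f) Y) \<Longrightarrow>
      \<epsilon> (lact (tensor (modulation f) Y) a S) = a * \<epsilon> S"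
    and \<psi>: "\<psi> \<in> formal_sums (modulation f) Y"
  shows "\<epsilon> (tcls (modulation f) Y \<psi>) = lin_ext (\<lambda>(x, y). x * \<epsilon> (tcls (modulation f) Y (delta (1, y)))) \<psi>"
proof -
  let ?cls = "tcls (modulation f) Y"
  have "\<epsilon> (?cls \<psi>) = lin_ext (\<lambda>p. \<epsilon> (?cls (delta p))) \<psi>"
    by (rule additive_on_tensor_eq_lin_ext[OF add \<psi>])
  also have "\<dots> = lin_ext (\<lambda>(x, y). x * \<epsilon> (?cls (delta (1, y)))) \<psi>"
  proof (rule lin_ext_cong)
    fix p assume "\<psi> p \<noteq> 0"
    then obtain x y where p: "p = (x, y)" and "y \<in> bcar Y"
      using \<psi> by (cases p) (auto simp: formal_sums_iff)
    have "lact (tensor (modulation f) Y) x (?cls (delta (1, y))) = ?cls (delta (x, y))"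
      using tensor_map_tcls[OF right_endo_modulation left_endo_id, of "delta (1, y)"] by (simp add: lact_tensor)
    then show "\<epsilon> (?cls (delta p)) = (\<lambda>(x, y). x * \<epsilon> (?cls (delta (1, y)))) p"
      using lact[of "?cls (delta (1, y))" x] \<open>y \<in> bcar Y\<close> by (simp add: p tcls_in_tensor delta_in_formal_sums)
  qed
  finally show ?thesis .
qed

lemma balanced_map_tensor_modulation_unit:
  fixes f :: "'b::ring_1 \<Rightarrow> 'a::ring_1" and Y :: "('b, 'a, 'y) bimod"
  assumes Y: "is_bimod iB iA Y"
    and add: "\<And>S T. S \<in> bcar (tensor (modulation f) Y) \<Longrightarrow> T \<in> bcar (tensor (modulation f) Y) \<Longrightarrow>
      \<epsilon> (badd (tensor (modulation f) Y) S T) = \<epsilon> S + \<epsilon> T"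
    and ract: "\<And>S a. S \<in> bcar (tensor (modulation f) Y) \<Longrightarrow>
      \<epsilon> (ract (tensor (modulation f) Y) S a) = \<epsilon> S * a"
  shows "balanced_map Y (modulation f) (\<lambda>(y, x). \<epsilon> (tcls (modulation f) Y (delta (1, y))) * x)"
proof -
  let ?cls = "tcls (modulation f) Y"
  have "\<epsilon> (?cls (delta (1, badd Y y y'))) = \<epsilon> (?cls (delta (1, y))) + \<epsilon> (?cls (delta (1, y')))"
    if "y \<in> bcar Y" "y' \<in> bcar Y" for y y'
  proof -
    have "?cls (delta (1, badd Y y y')) = ?cls (delta (1, y) + delta (1, y'))"
      using tens_rel_addr[of 1 "modulation f", OF _ that] by (simp add: tcls_eq_iff diff_diff_eq)
    then show ?thesis
      using add[of "?cls (delta (1, y))" "?cls (delta (1, y'))"] that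
      by (simp add: tensor_badd_tcls tcls_in_tensor delta_in_formal_sums)
  qed
  moreover have "\<epsilon> (?cls (delta (1, ract Y y a))) = \<epsilon> (?cls (delta (1, y))) * a" if "y \<in> bcar Y" for y a
  proof -
    have "ract (tensor (modulation f) Y) (?cls (delta (1, y))) a = ?cls (delta (1, ract Y y a))"
      using tensor_map_tcls[OF right_endo_id left_endo_ract[OF Y], of "delta (1, y)"] by (simp add: ract_tensor)
    then show ?thesis
      using ract[of "?cls (delta (1, y))" a] that by (simp add: tcls_in_tensor delta_in_formal_sums)
  qed
  ultimately show ?thesis
    by (simp add: balanced_map_def algebra_simps)
qed

lemma surj_if_tensor_modulation_isos:
  fixes f :: "'b::ring_1 \<Rightarrow> 'a::ring_1" and Y :: "('b, 'a, 'y) bimod"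
  assumes Y: "is_bimod iB iA Y"
    and iso_A: "bimod_iso (tensor (modulation f) Y) (modulation (id :: 'a \<Rightarrow> 'a))"
    and iso_B: "bimod_iso (tensor Y (modulation f)) (modulation (id :: 'b \<Rightarrow> 'b))"
  shows "surj f"
proof -
  let ?T = "tensor (modulation f) Y" and ?cls = "tcls (modulation f) Y"
  obtain \<epsilon> where bij: "bij_betw \<epsilon> (bcar ?T) UNIV"
    and \<epsilon>_add: "\<And>S T. S \<in> bcar ?T \<Longrightarrow> T \<in> bcar ?T \<Longrightarrow> \<epsilon> (badd ?T S T) = \<epsilon> S + \<epsilon> T"
    and \<epsilon>_lact: "\<And>a S. S \<in> bcar ?T \<Longrightarrow> \<epsilon> (lact ?T a S) = a * \<epsilon> S"
    and \<epsilon>_ract: "\<And>S b. S \<in> bcar ?T \<Longrightarrow> \<epsilon> (ract ?T S b) = \<epsilon> S * b"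
    using iso_A by (rule bimod_iso_regularE) blast
  define k where "k y = \<epsilon> (?cls (delta (1, y)))" for y
  let ?\<mu> = "\<lambda>(x, y). x * k y"
  have \<epsilon>_eq: "\<epsilon> (?cls \<psi>) = lin_ext ?\<mu> \<psi>" if "\<psi> \<in> formal_sums (modulation f) Y" for \<psi>
    unfolding k_def using \<epsilon>_add \<epsilon>_lact that by (rule tensor_modulation_additive_eq_lin_ext)
  have balanced: "balanced_map Y (modulation f) (\<lambda>(y, x). k y * x)"
    unfolding k_def using Y \<epsilon>_add \<epsilon>_ract by (rule balanced_map_tensor_modulation_unit)
  obtain \<psi>\<^sub>1 where \<psi>\<^sub>1: "\<psi>\<^sub>1 \<in> formal_sums (modulation f) Y" and "\<epsilon> (?cls \<psi>\<^sub>1) = 1"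
  proof -
    obtain S where "S \<in> bcar ?T" "\<epsilon> S = 1"
      using bij_betw_imp_surj_on[OF bij] by (metis UNIV_I imageE)
    then show thesis
      using that by (metis tensor_carrierE)
  qed
  show "surj f"
    unfolding surj_def
  proof
    fix a
    obtain b where pure_eq: "\<And>y. y \<in> bcar Y \<Longrightarrow>
        tcls Y (modulation f) (delta (y, a)) = tcls Y (modulation f) (delta (y, f b))"
      using tensor_modulation_right_factor_in_image[OF Y iso_B] by blast
    have k_eq: "k y * a = k y * f b" if "y \<in> bcar Y" for y
      using lin_ext_tens_rel[OF balanced, of "delta (y, a) - delta (y, f b)"] pure_eq[OF that]
      by (simp add: tcls_eq_iff lin_ext_diff)
    have "a = lin_ext ?\<mu> \<psi>\<^sub>1 * a"
      using \<open>\<epsilon> (?cls \<psi>\<^sub>1) = 1\<close> \<epsilon>_eq[OF \<psi>\<^sub>1] by simp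
    also have "\<dots> = lin_ext (\<lambda>p. ?\<mu> p * a) \<psi>\<^sub>1"
      by (rule lin_ext_mult_right[symmetric])
    also have "\<dots> = lin_ext (\<lambda>p. ?\<mu> p * f b) \<psi>\<^sub>1"
    proof (rule lin_ext_cong)
      fix p assume "\<psi>\<^sub>1 p \<noteq> 0"
      then have "snd p \<in> bcar Y"
        using \<psi>\<^sub>1 by (auto simp: formal_sums_iff)
      then show "?\<mu> p * a = ?\<mu> p * f b"
        using k_eq by (cases p) (simp add: mult.assoc)
    qed
    also have "\<dots> = f b"
      using \<open>\<epsilon> (?cls \<psi>\<^sub>1) = 1\<close> \<epsilon>_eq[OF \<psi>\<^sub>1] by (simp add: lin_ext_mult_right)
    finally show "\<exists>b. a = f b" ..
  qed
qed

lemma modulation_is_bimod: "k_algebra iA \<Longrightarrow> alg_hom iA iB f \<Longrightarrow> is_bimod iA iB (modulation f)"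
  by (simp add: is_bimod_def k_algebra_def alg_hom_def algebra_simps modulation_def)

lemma alg_hom_inv:
  assumes "alg_hom iA iB f" and "bij f"
  shows "alg_hom iB iA (inv f)"
proof -
  have "inv f (f b) = b" and "f (inv f a) = a" for a b
    using assms(2) by (simp_all add: bij_is_inj bij_is_surj surj_f_inv_f)
  then show ?thesis
    using assms(1) unfolding alg_hom_def by metis
qed

lemma inverse_of_modulation_inv:
  assumes kB: "k_algebra iB" and hom: "alg_hom iA iB f" and "bij f"
  shows "inverse_of_modulation iA iB f (modulation (inv f))"
proof -
  have hom_inv: "alg_hom iB iA (inv f)"
    using hom \<open>bij f\<close> by (rule alg_hom_inv)
  have "f \<circ> inv f = id" and "inv f \<circ> f = id"
    using \<open>bij f\<close> by (simp_all only: bij_is_surj bij_is_inj flip: surj_iff inj_iff)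
  moreover have "bimod_iso (tensor (modulation f) (modulation (inv f))) (modulation (f \<circ> inv f))"
    using hom by (intro tensor_modulation_iso) (simp_all add: alg_hom_def)
  moreover have "bimod_iso (tensor (modulation (inv f)) (modulation f)) (modulation (inv f \<circ> f))"
    using hom_inv by (intro tensor_modulation_iso) (simp_all add: alg_hom_def)
  ultimately show ?thesis
    using modulation_is_bimod[OF kB hom_inv] by (simp add: inverse_of_modulation_def)
qed

theorem lemma2p3:
  fixes iA :: "'k::comm_ring_1 \<Rightarrow> 'a::ring_1" and iB :: "'k \<Rightarrow> 'b::ring_1"
    and f :: "'b \<Rightarrow> 'a"
  assumes "k_algebra iA" and "k_algebra iB" and "alg_hom iA iB f"
  shows "((\<exists>Y :: ('b, 'a, 'y) bimod. inverse_of_modulation iA iB f Y) \<longrightarrow> alg_iso iA iB f) \<and>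
         (alg_iso iA iB f \<longrightarrow> (\<exists>Y :: ('b, 'a, 'b) bimod. inverse_of_modulation iA iB f Y))"
proof (intro conjI impI)
  assume "\<exists>Y :: ('b, 'a, 'y) bimod. inverse_of_modulation iA iB f Y"
  then obtain Y :: "('b, 'a, 'y) bimod"
    where Y: "is_bimod iB iA Y"
      and iso_A: "bimod_iso (tensor (modulation f) Y) (modulation (id :: 'a \<Rightarrow> 'a))"
      and iso_B: "bimod_iso (tensor Y (modulation f)) (modulation (id :: 'b \<Rightarrow> 'b))"
    by (auto simp: inverse_of_modulation_def)
  have "bij f"
    using inj_if_tensor_modulation_iso[OF iso_B] surj_if_tensor_modulation_isos[OF Y iso_A iso_B]
    by (simp add: bij_def)
  then show "alg_iso iA iB f"
    using assms(3) by (simp add: alg_iso_def)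
next
  assume "alg_iso iA iB f"
  then show "\<exists>Y :: ('b, 'a, 'b) bimod. inverse_of_modulation iA iB f Y"
    using inverse_of_modulation_inv[OF assms(2,3)] by (auto simp: alg_iso_def)
qed

end
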